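(* Let $T>0$, $\alpha\in(0,1)$, and let $H$ be a Hilbert space with inner product $(\cdot,\cdot)_H$. Suppose one of the following holds: (i) $f_1\in C([0,T];H)$, the Riemann–Liouville fractional derivative of $f_1$ of order $\alpha$ exists at $t\in(0,T]$, and $f_2\in H^\beta([0,T];H)$ with $0<\alpha<\beta<1$; (ii) $f_1\in H^\beta([0,T];H)$ and $f_2\in H^\delta([0,T];H)$ for some $0<\beta<1$, $0<\delta<1$ with $0<\alpha<\beta+\delta$, and the Riemann–Liouville fractional derivatives of order $\alpha$ of both $f_1$ and $f_2$ exist at $t\in(0,T]$. Then at each such $t\in(0,T]$, $$D_t^\alpha\big(f_1(t),f_2(t)\big)_H=\big(D_t^\alpha f_1(t),f_2(t)\big)_H+\big(f_1(t),D_t^\alpha f_2(t)\big)_H-\frac{\alpha}{\Gamma(1-\alpha)}\int_0^t\frac{\big(f_1(s)-f_1(t),f_2(s)-f_2(t)\big)_H}{(t-s)^{\alpha+1}}\,ds-\frac{\big(f_1(t),f_2(t)\big)_H}{\Gamma(1-\alpha)t^\alpha}.$$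
   Context: $J_t^{1-\alpha}g(t)=\frac{1}{\Gamma(1-\alpha)}\int_0^t(t-s)^{-\alpha}g(s)\,ds$; the Riemann–Liouville derivative of order $\alpha$ at $t$ is $D_t^\alpha g(t)=\frac{d}{dt}J_t^{1-\alpha}g(t)$, and it "exists at $t$" when this derivative exists at $t$. For $0<\gamma<1$, $H^\gamma([0,T];H)$ is the set of $g\in C([0,T];H)$ for which there is $M>0$ with $\|g(t)-g(s)\|_H\le M|t-s|^\gamma$ for all $t,s\in[0,T]$. *)

theory Defs
  imports "HOL-Analysis.Analysis"
begin

text \<open>Riemann--Liouville integral of order 1-alpha of an H-valued function g on [0,t]
  (Henstock--Kurzweil integral).\<close>
definition RL_J1 :: "real \<Rightarrow> (real \<Rightarrow> 'a::real_normed_vector) \<Rightarrow> real \<Rightarrow> 'a" where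
  "RL_J1 \<alpha> g t = (1 / Gamma (1 - \<alpha>)) *\<^sub>R integral {0..t} (\<lambda>s. ((t - s) powr (- \<alpha>)) *\<^sub>R g s)"

definition RL_D_exists :: "real \<Rightarrow> real \<Rightarrow> (real \<Rightarrow> 'a::real_normed_vector) \<Rightarrow> real \<Rightarrow> bool" where
  "RL_D_exists T \<alpha> g t \<longleftrightarrow> (\<lambda>\<tau>. RL_J1 \<alpha> g \<tau>) differentiable (at t within {0..T})"

definition RL_D :: "real \<Rightarrow> real \<Rightarrow> (real \<Rightarrow> 'a::real_normed_vector) \<Rightarrow> real \<Rightarrow> 'a" where
  "RL_D T \<alpha> g t = vector_derivative (\<lambda>\<tau>. RL_J1 \<alpha> g \<tau>) (at t within {0..T})"

definition holder_space :: "real \<Rightarrow> real \<Rightarrow> (real \<Rightarrow> 'a::real_normed_vector) \<Rightarrow> bool" where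
  "holder_space \<gamma> T g \<longleftrightarrow> continuous_on {0..T} g \<and>
     (\<exists>M>0. \<forall>t\<in>{0..T}. \<forall>s\<in>{0..T}. norm (g t - g s) \<le> M * \<bar>t - s\<bar> powr \<gamma>)"

end

theory Submission
  imports Defs
begin

text \<open>
  Put \<open>R s = inner (f1 s - f1 t) (f2 s - f2 t)\<close>. Since
  \<open>inner (f1 s) (f2 s) = inner (f1 s) (f2 t) + inner (f1 t) (f2 s) + R s - inner (f1 t) (f2 t)\<close>,
  the fractional integral of the product splits into two terms that are differentiable at \<open>t\<close>
  by hypothesis, the fractional integral of a constant, and the fractional integral of \<open>R\<close>.
  Under either hypothesis \<open>R\<close> vanishes at \<open>t\<close> to some order \<open>\<gamma> > \<alpha>\<close>, and for such a function
  one may differentiate under the singular integral: the derivative of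
  \<open>\<tau> \<mapsto> integral {0..\<tau>} (\<lambda>s. (\<tau> - s) powr (- \<alpha>) * R s)\<close> at \<open>t\<close> is
  \<open>- \<alpha> * integral {0..t} (\<lambda>s. (t - s) powr (- \<alpha> - 1) * R s)\<close>. This rests on bounds for the
  second-order Taylor remainder of the kernel, proved separately for \<open>\<tau> > t\<close> and \<open>\<tau> < t\<close>.
  The same argument applied to \<open>f2 - f2 t\<close> shows that the derivative of \<open>f2\<close> exists in case (i).
\<close>

section \<open>Integrals against singular power kernels\<close>

lemma powr_kernel_has_integral:
  fixes a c p :: real
  assumes "a \<le> c" "p > -1"
  shows "((\<lambda>s. (c - s) powr p) has_integral (c - a) powr (p + 1) / (p + 1)) {a..c}"
proof -
  define F where "F = (\<lambda>s. - ((c - s) powr (p + 1) / (p + 1)))"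
  have "((\<lambda>s. (c - s) powr p) has_integral (F c - F a)) {a..c}"
  proof (rule fundamental_theorem_of_calculus_interior_strong[of "{}"])
    show "continuous_on {a..c} F" unfolding F_def
      using assms by (auto intro!: continuous_intros continuous_on_powr')
    fix x assume x: "x \<in> {a<..<c} - {}"
    have "(F has_real_derivative (c - x) powr p) (at x)"
      unfolding F_def using assms x by (auto intro!: derivative_eq_intros)
    then show "(F has_vector_derivative (c - x) powr p) (at x)"
      by (simp add: has_real_derivative_iff_has_vector_derivative)
  qed (use assms in auto)
  then show ?thesis unfolding F_def by simp
qed

lemma powr_kernel_integrable:
  fixes a c p :: real
  assumes "a \<le> c" "p > -1"
  shows "(\<lambda>s. (c - s) powr p) integrable_on {a..c}"
  using powr_kernel_has_integral[OF assms] by blast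

lemma powr_kernel_integral:
  fixes a c p :: real
  assumes "a \<le> c" "p > -1"
  shows "integral {a..c} (\<lambda>s. (c - s) powr p) = (c - a) powr (p + 1) / (p + 1)"
  using powr_kernel_has_integral[OF assms] by blast

lemma continuous_on_from_0_if_norm_le_linear:
  fixes \<phi> :: "real \<Rightarrow> 'b::real_normed_vector"
  assumes cont: "continuous_on {0<..U} \<phi>" and "\<phi> 0 = 0"
    and bound: "\<And>u. u \<in> {0..U} \<Longrightarrow> norm (\<phi> u) \<le> K * u"
  shows "continuous_on {0..U} \<phi>"
  unfolding continuous_on_eq_continuous_within
proof
  fix u assume u: "u \<in> {0..U}"
  show "continuous (at u within {0..U}) \<phi>"
  proof (cases "u = 0")
    case True
    have "(\<phi> \<longlongrightarrow> 0) (at 0 within {0..U})"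
    proof (rule tendsto_norm_zero_cancel, rule tendsto_sandwich[of "\<lambda>_. 0" _ _ "\<lambda>x. K * x"])
      show "\<forall>\<^sub>F x in at 0 within {0..U}. norm (\<phi> x) \<le> K * x"
        using bound by (auto simp: eventually_at_filter)
      show "((\<lambda>x. K * x) \<longlongrightarrow> 0) (at 0 within {0..U})"
        by (auto intro!: tendsto_eq_intros)
    qed auto
    then show ?thesis using True \<open>\<phi> 0 = 0\<close> by (simp add: continuous_within)
  next
    case False
    then have "at u within {0..U} = at u within {0<..U}"
      using u by (intro at_within_nhd[of _ "{0<..}"]) auto
    then show ?thesis
      using cont u False by (simp add: continuous_on_eq_continuous_within)
  qed
qed

lemma has_integral_substitution_interior:
  fixes \<phi> f :: "real \<Rightarrow> 'b::banach"
  assumes "a \<le> c" and cont_\<phi>: "continuous_on {0..U} \<phi>"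
    and cont_g: "continuous_on {a..c} g" and g_range: "g ` {a..c} \<subseteq> {0..U}"
    and g_deriv: "\<And>x. x \<in> {a<..<c} \<Longrightarrow> (g has_real_derivative g' x) (at x)"
    and f: "\<And>x. x \<in> {a<..<c} \<Longrightarrow> f x = g' x *\<^sub>R \<phi> (g x)"
  shows "(f has_integral (integral {0..g c} \<phi> - integral {0..g a} \<phi>)) {a..c}"
proof (rule fundamental_theorem_of_calculus_interior_strong[of "{}"])
  show "continuous_on {a..c} (\<lambda>x. integral {0..g x} \<phi>)"
    by (rule continuous_on_compose2[OF indefinite_integral_continuous_1
          [OF integrable_continuous_real[OF cont_\<phi>]] cont_g g_range])
  fix x assume x: "x \<in> {a<..<c} - {}"
  have "g x \<in> {0..U}" using g_range x by (auto simp: image_subset_iff)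
  then have "((\<lambda>y. integral {0..y} \<phi>) has_vector_derivative \<phi> (g x)) (at (g x) within g ` {a..c})"
    using g_range by (blast intro: has_vector_derivative_within_subset
        integral_has_vector_derivative cont_\<phi>)
  moreover have "(g has_vector_derivative g' x) (at x within {a..c})"
    using g_deriv[of x] x by (simp add: has_real_derivative_iff_has_vector_derivative
        has_vector_derivative_at_within)
  ultimately have "((\<lambda>x. integral {0..g x} \<phi>) has_vector_derivative f x) (at x within {a..c})"
    using vector_diff_chain_within f[of x] x by (auto simp: o_def)
  then show "((\<lambda>x. integral {0..g x} \<phi>) has_vector_derivative f x) (at x)"
    using x by (simp add: at_within_Icc_at)
qed (use assms in auto)

lemma continuous_on_singular_substitute:
  fixes R :: "real \<Rightarrow> 'b::real_normed_vector"
  assumes ac: "a \<le> c" and contR: "continuous_on {a..c} R"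
    and bound: "\<And>s. s \<in> {a..<c} \<Longrightarrow> norm (R s) \<le> C * (c - s) powr \<gamma>"
    and \<theta>: "\<theta> > 0" "p + \<gamma> + 1 = 2 * \<theta>"
  shows "continuous_on {0..(c - a) powr \<theta>}
    (\<lambda>u. (- (1 / \<theta>) * u powr ((p + 1) / \<theta> - 1)) *\<^sub>R R (c - u powr (1 / \<theta>)))"
    (is "continuous_on {0..?U} ?\<phi>")
proof (rule continuous_on_from_0_if_norm_le_linear)
  have root_range: "c - u powr (1 / \<theta>) \<in> {a..c}" if "u \<in> {0..?U}" for u
  proof -
    have "u powr (1 / \<theta>) \<le> ?U powr (1 / \<theta>)"
      using that \<theta> by (intro powr_mono2) auto
    also have "\<dots> = c - a" using \<theta> ac by (simp add: powr_powr)
    finally show ?thesis by simp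
  qed
  show "continuous_on {0<..?U} ?\<phi>"
  proof (intro continuous_intros continuous_on_compose2[OF contR])
    show "(\<lambda>u. c - u powr (1 / \<theta>)) ` {0<..?U} \<subseteq> {a..c}"
      using root_range by (auto simp: image_subset_iff)
  qed auto
  show "norm (?\<phi> u) \<le> C / \<theta> * u" if u: "u \<in> {0..?U}" for u
  proof (cases "u = 0")
    case False
    then have "u > 0" using u by auto
    define s where "s = c - u powr (1 / \<theta>)"
    have s: "s \<in> {a..<c}" using root_range[OF u] \<open>u > 0\<close> by (auto simp: s_def)
    have "norm (?\<phi> u) = 1 / \<theta> * u powr ((p + 1) / \<theta> - 1) * norm (R s)"
      using \<theta> by (simp add: s_def abs_mult)
    also have "\<dots> \<le> 1 / \<theta> * u powr ((p + 1) / \<theta> - 1) * (C * (c - s) powr \<gamma>)"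
      using bound[OF s] \<theta> by (intro mult_left_mono) auto
    also have "\<dots> = C / \<theta> * u powr ((p + 1) / \<theta> - 1 + \<gamma> / \<theta>)"
      using \<open>u > 0\<close> by (simp add: s_def powr_powr powr_add)
    also have "(p + 1) / \<theta> - 1 + \<gamma> / \<theta> = 1"
    proof -
      have "(p + 1) / \<theta> - 1 + \<gamma> / \<theta> = (p + \<gamma> + 1) / \<theta> - 1"
        by (simp add: add_divide_distrib)
      then show ?thesis using \<theta> by simp
    qed
    finally show ?thesis using \<open>u > 0\<close> by simp
  qed simp
qed simp

lemma singular_kernel_integrable:
  fixes R :: "real \<Rightarrow> 'b::banach"
  assumes ac: "a \<le> c" and contR: "continuous_on {a..c} R"
    and bound: "\<And>s. s \<in> {a..<c} \<Longrightarrow> norm (R s) \<le> C * (c - s) powr \<gamma>"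
    and exponent: "p + \<gamma> > -1"
  shows "(\<lambda>s. (c - s) powr p *\<^sub>R R s) integrable_on {a..c}"
proof -
  \<comment> \<open>The substitution \<open>u = (c - s) powr \<theta>\<close> turns the integrand into a function
    \<open>\<phi>\<close> with \<open>norm (\<phi> u) \<le> C / \<theta> * u\<close>, which is continuous up to \<open>u = 0\<close>.\<close>
  define \<theta> where "\<theta> = (p + \<gamma> + 1) / 2"
  have \<theta>: "\<theta> > 0" "p + \<gamma> + 1 = 2 * \<theta>" using exponent by (auto simp: \<theta>_def)
  define \<phi> where "\<phi> = (\<lambda>u. (- (1 / \<theta>) * u powr ((p + 1) / \<theta> - 1)) *\<^sub>R R (c - u powr (1 / \<theta>)))"
  have cont_\<phi>: "continuous_on {0..(c - a) powr \<theta>} \<phi>"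
    unfolding \<phi>_def by (rule continuous_on_singular_substitute[OF ac contR bound \<theta>])
  have "((\<lambda>s. (c - s) powr p *\<^sub>R R s) has_integral
      (integral {0..(c - c) powr \<theta>} \<phi> - integral {0..(c - a) powr \<theta>} \<phi>)) {a..c}"
  proof (rule has_integral_substitution_interior[OF ac cont_\<phi>])
    show "continuous_on {a..c} (\<lambda>x. (c - x) powr \<theta>)"
      using \<theta> by (auto intro!: continuous_intros continuous_on_powr')
    show "(\<lambda>x. (c - x) powr \<theta>) ` {a..c} \<subseteq> {0..(c - a) powr \<theta>}"
      using \<theta> by (auto intro!: powr_mono2)
    fix x assume "x \<in> {a<..<c}"
    then have "c - x > 0" by auto
    then show "((\<lambda>x. (c - x) powr \<theta>) has_real_derivative - \<theta> * (c - x) powr (\<theta> - 1)) (at x)"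
      by (auto intro!: derivative_eq_intros)
    have "\<theta> * ((p + 1) / \<theta> - 1) = p + 1 - \<theta>"
      using \<theta> by (simp add: field_simps)
    then have "\<phi> ((c - x) powr \<theta>) = (- (1 / \<theta>) * (c - x) powr (p + 1 - \<theta>)) *\<^sub>R R x"
      using \<theta> \<open>c - x > 0\<close> by (simp add: \<phi>_def powr_powr)
    moreover have "(c - x) powr (\<theta> - 1) * (c - x) powr (p + 1 - \<theta>) = (c - x) powr p"
      by (simp add: powr_add[symmetric])
    ultimately show "(c - x) powr p *\<^sub>R R x
        = (- \<theta> * (c - x) powr (\<theta> - 1)) *\<^sub>R \<phi> ((c - x) powr \<theta>)"
      using \<theta> by (simp add: mult_ac)
  qed
  then show ?thesis by blast
qed

text \<open>
  A type variable of sort \<open>{real_normed_vector, complete_space}\<close> does not have sort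
  \<open>banach\<close>, so the Banach-space results of the integration library do not apply to it
  directly; they are applied to the isometric copy \<open>'a wrapped\<close> instead.
\<close>

typedef 'a wrapped = "UNIV :: 'a::{real_normed_vector, complete_space} set"
  morphisms unwrap wrap by simp

setup_lifting type_definition_wrapped

instantiation wrapped :: ("{real_normed_vector, complete_space}") real_normed_vector
begin
lift_definition zero_wrapped :: "'a wrapped" is 0 .
lift_definition plus_wrapped :: "'a wrapped \<Rightarrow> 'a wrapped \<Rightarrow> 'a wrapped" is "(+)" .
lift_definition minus_wrapped :: "'a wrapped \<Rightarrow> 'a wrapped \<Rightarrow> 'a wrapped" is "(-)" .
lift_definition uminus_wrapped :: "'a wrapped \<Rightarrow> 'a wrapped" is uminus .
lift_definition scaleR_wrapped :: "real \<Rightarrow> 'a wrapped \<Rightarrow> 'a wrapped" is scaleR .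
lift_definition norm_wrapped :: "'a wrapped \<Rightarrow> real" is norm .
lift_definition sgn_wrapped :: "'a wrapped \<Rightarrow> 'a wrapped" is sgn .
lift_definition dist_wrapped :: "'a wrapped \<Rightarrow> 'a wrapped \<Rightarrow> real" is dist .
definition uniformity_wrapped :: "('a wrapped \<times> 'a wrapped) filter"
  where "uniformity_wrapped = (INF e\<in>{0 <..}. principal {(x, y). dist x y < e})"
definition open_wrapped :: "'a wrapped set \<Rightarrow> bool"
  where "open_wrapped U \<longleftrightarrow> (\<forall>x\<in>U. eventually (\<lambda>(x', y). x' = x \<longrightarrow> y \<in> U) uniformity)"
instance
proof
  fix a b c :: "'a wrapped" and r s :: real and U :: "'a wrapped set"
  show "a + b + c = a + (b + c)" by transfer (simp add: add.assoc)
  show "a + b = b + a" by transfer (simp add: add.commute)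
  show "0 + a = a" by transfer simp
  show "- a + a = 0" by transfer simp
  show "a - b = a + - b" by transfer simp
  show "r *\<^sub>R (a + b) = r *\<^sub>R a + r *\<^sub>R b" by transfer (simp add: scaleR_add_right)
  show "(r + s) *\<^sub>R a = r *\<^sub>R a + s *\<^sub>R a" by transfer (simp add: scaleR_add_left)
  show "r *\<^sub>R s *\<^sub>R a = (r * s) *\<^sub>R a" by transfer simp
  show "1 *\<^sub>R a = a" by transfer simp
  show "sgn a = inverse (norm a) *\<^sub>R a" by transfer (simp add: sgn_div_norm)
  show "dist a b = norm (a - b)" by transfer (simp add: dist_norm)
  show "uniformity = (INF e\<in>{0<..}. principal {(x, y). dist (x::'a wrapped) y < e})"
    by (rule uniformity_wrapped_def)
  show "open U = (\<forall>x\<in>U. \<forall>\<^sub>F (x', y) in uniformity. x' = x \<longrightarrow> y \<in> U)"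
    by (rule open_wrapped_def)
  show "norm (a + b) \<le> norm a + norm b" by transfer (rule norm_triangle_ineq)
  show "norm (r *\<^sub>R a) = \<bar>r\<bar> * norm a" by transfer simp
  show "(norm a = 0) = (a = 0)" by transfer simp
qed
end

lemma bounded_linear_wrap: "bounded_linear wrap"
  by (rule bounded_linear_intro[where K = 1]; transfer) auto

lemma bounded_linear_unwrap: "bounded_linear unwrap"
  by (rule bounded_linear_intro[where K = 1]; transfer) auto

lemma norm_wrap [simp]: "norm (wrap x) = norm x"
  by transfer simp

instance wrapped :: ("{real_normed_vector, complete_space}") banach
proof
  fix X :: "nat \<Rightarrow> 'a wrapped" assume "Cauchy X"
  then have "Cauchy (\<lambda>n. unwrap (X n))"
    unfolding Cauchy_def by transfer
  then obtain x where "(\<lambda>n. unwrap (X n)) \<longlonglongrightarrow> x"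
    using Cauchy_convergent convergent_def by blast
  from bounded_linear.tendsto[OF bounded_linear_wrap this] show "convergent X"
    by (auto simp: convergent_def unwrap_inverse)
qed

lemma wrap_diff: "wrap (x - y) = wrap x - wrap y"
  by transfer simp

lemma integrable_on_wrap_iff: "(\<lambda>x. wrap (f x)) integrable_on S \<longleftrightarrow> f integrable_on S"
proof
  assume "(\<lambda>x. wrap (f x)) integrable_on S"
  from integrable_linear[OF this bounded_linear_unwrap] show "f integrable_on S"
    by (simp add: o_def wrap_inverse)
next
  assume "f integrable_on S"
  from integrable_linear[OF this bounded_linear_wrap] show "(\<lambda>x. wrap (f x)) integrable_on S"
    by (simp add: o_def)
qed

lemma integral_wrap: "integral S (\<lambda>x. wrap (f x)) = wrap (integral S f)"
proof (cases "f integrable_on S")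
  case True
  from integral_linear[OF this bounded_linear_wrap] show ?thesis by (simp add: o_def)
next
  case False
  then show ?thesis
    using integrable_on_wrap_iff[of f S] by (simp add: not_integrable_integral zero_wrapped.abs_eq)
qed

lemma RL_J1_wrap: "RL_J1 \<alpha> (\<lambda>s. wrap (f s)) x = wrap (RL_J1 \<alpha> f x)"
proof -
  have "(\<lambda>s. (x - s) powr (- \<alpha>) *\<^sub>R wrap (f s)) = (\<lambda>s. wrap ((x - s) powr (- \<alpha>) *\<^sub>R f s))"
    by (simp add: fun_eq_iff scaleR_wrapped.abs_eq)
  then show ?thesis
    by (simp add: RL_J1_def integral_wrap scaleR_wrapped.abs_eq)
qed

lemma RL_D_exists_unwrap:
  assumes "RL_D_exists T \<alpha> (\<lambda>s. wrap (f s)) t"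
  shows "RL_D_exists T \<alpha> f t"
proof -
  obtain D where "((\<lambda>\<tau>. wrap (RL_J1 \<alpha> f \<tau>)) has_vector_derivative D) (at t within {0..T})"
    using assms by (auto simp: RL_D_exists_def RL_J1_wrap vector_derivative_works)
  from bounded_linear.has_vector_derivative[OF bounded_linear_unwrap this]
  show ?thesis
    unfolding RL_D_exists_def by (auto simp: wrap_inverse intro: differentiableI_vector)
qed

lemma holder_space_wrap:
  assumes "holder_space \<gamma> T f"
  shows "holder_space \<gamma> T (\<lambda>s. wrap (f s))"
proof -
  have "continuous_on {0..T} f" using assms by (simp add: holder_space_def)
  then have "continuous_on {0..T} (\<lambda>s. wrap (f s))"
    by (rule continuous_on_compose2[OF linear_continuous_on[OF bounded_linear_wrap]]) auto
  then show ?thesis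
    using assms by (simp add: holder_space_def flip: wrap_diff)
qed

lemma RL_integrand_integrable:
  fixes f :: "real \<Rightarrow> 'a::{real_normed_vector, complete_space}"
  assumes "0 \<le> x" and "continuous_on {0..x} f" and "\<alpha> < 1"
  shows "(\<lambda>s. (x - s) powr (- \<alpha>) *\<^sub>R f s) integrable_on {0..x}"
proof -
  obtain B where "\<And>s. s \<in> {0..x} \<Longrightarrow> norm (f s) \<le> B"
    using compact_imp_bounded[OF compact_continuous_image[OF assms(2) compact_Icc]]
    unfolding bounded_iff by blast
  moreover have "continuous_on {0..x} (\<lambda>s. wrap (f s))"
    by (rule continuous_on_compose2[OF linear_continuous_on[OF bounded_linear_wrap] assms(2)]) auto
  ultimately have "(\<lambda>s. (x - s) powr (- \<alpha>) *\<^sub>R wrap (f s)) integrable_on {0..x}"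
    by (intro singular_kernel_integrable[where C = B and \<gamma> = 0]) (use assms in auto)
  then show ?thesis
    by (simp add: scaleR_wrapped.abs_eq integrable_on_wrap_iff)
qed

section \<open>Taylor remainders of the kernel\<close>

lemma one_plus_mult_ln_le_powr:
  fixes z a :: real
  assumes "z > 0"
  shows "1 + a * ln z \<le> z powr a"
  using exp_ge_add_one_self[of "a * ln z"] assms by (simp add: powr_def)

lemma powr_neg_ge_tangent:
  fixes y \<alpha> :: real
  assumes "y > 0" "\<alpha> \<ge> 0"
  shows "1 - \<alpha> * (y - 1) \<le> y powr (- \<alpha>)"
proof -
  have "\<alpha> * ln y \<le> \<alpha> * (y - 1)"
    using ln_le_minus_one[OF assms(1)] assms(2) by (intro mult_left_mono)
  then show ?thesis
    using one_plus_mult_ln_le_powr[OF assms(1), of "- \<alpha>"] by simp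
qed

lemma powr_one_plus_neg_le_quadratic:
  fixes x \<alpha> :: real
  assumes x: "0 \<le> x" "x \<le> 1" and \<alpha>: "0 < \<alpha>" "\<alpha> < 1"
  shows "(1 + x) powr (- \<alpha>) \<le> 1 - \<alpha> * x + 2 * x\<^sup>2"
proof (cases "x = 0")
  case False
  define D where "D = 1 + \<alpha> * (x - x\<^sup>2)"
  have "x\<^sup>2 \<le> x" using x by (simp add: power2_eq_square mult_left_le_one_le)
  then have D: "D \<ge> 1" using \<alpha> by (simp add: D_def)
  have "x - x\<^sup>2 \<le> ln (1 + x)" using ln_one_plus_pos_lower_bound[of x] x by simp
  then have "\<alpha> * (x - x\<^sup>2) \<le> \<alpha> * ln (1 + x)" using \<alpha> by (intro mult_left_mono) auto
  then have "D \<le> (1 + x) powr \<alpha>"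
    using one_plus_mult_ln_le_powr[of "1 + x" \<alpha>] x by (simp add: D_def)
  then have "(1 + x) powr (- \<alpha>) \<le> 1 / D"
    using D by (simp add: powr_minus divide_inverse le_imp_inverse_le)
  also have "1 / D \<le> 1 - \<alpha> * x + 2 * x\<^sup>2"
  proof -
    have "\<alpha>\<^sup>2 \<le> \<alpha>" using \<alpha> by (simp add: power2_eq_square mult_left_le_one_le)
    then have "2 - \<alpha> - \<alpha>\<^sup>2 \<ge> 0" using \<alpha> by linarith
    moreover have "x * \<alpha> * (2 * (1 - x) + \<alpha>) \<ge> 0" using \<alpha> x by simp
    ultimately have "0 \<le> x\<^sup>2 * ((2 - \<alpha> - \<alpha>\<^sup>2) + x * \<alpha> * (2 * (1 - x) + \<alpha>))"
      by simp
    also have "\<dots> = D * (1 - \<alpha> * x + 2 * x\<^sup>2) - 1"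
      by (simp add: D_def algebra_simps power2_eq_square)
    finally show ?thesis using D by (simp add: divide_simps mult.commute)
  qed
  finally show ?thesis .
qed simp

lemma one_minus_quadratic_le_powr:
  fixes x \<alpha> :: real
  assumes x: "0 < x" "x \<le> 1 / 2" and \<alpha>: "0 < \<alpha>" "\<alpha> < 1"
  shows "1 - 4 * x\<^sup>2 \<le> (1 - x) powr \<alpha> * (1 + \<alpha> * x)"
proof -
  have "1 / (1 - x) - 1 = x / (1 - x)" using x by (simp add: field_simps)
  then have "- x / (1 - x) \<le> ln (1 - x)"
    using ln_le_minus_one[of "1 / (1 - x)"] x by (simp add: ln_div)
  then have "\<alpha> * (- x / (1 - x)) \<le> \<alpha> * ln (1 - x)" using \<alpha> by (intro mult_left_mono) auto
  then have P: "1 - \<alpha> * x / (1 - x) \<le> (1 - x) powr \<alpha>"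
    using one_plus_mult_ln_le_powr[of "1 - x" \<alpha>] x by simp
  have q: "x / (1 - x) \<le> 2 * x" using x by (simp add: field_simps)
  have "\<alpha>\<^sup>2 \<le> \<alpha>" using \<alpha> by (simp add: power2_eq_square mult_left_le_one_le)
  then have "\<alpha> + \<alpha>\<^sup>2 \<le> 2" using \<alpha> by linarith
  then have "(\<alpha> + \<alpha>\<^sup>2) * x * (x / (1 - x)) \<le> 2 * x * (2 * x)"
    using q x \<alpha> by (intro mult_mono) auto
  then have "1 - 4 * x\<^sup>2 \<le> (1 - \<alpha> * x / (1 - x)) * (1 + \<alpha> * x)"
    using x by (simp add: field_simps power2_eq_square)
  also have "\<dots> \<le> (1 - x) powr \<alpha> * (1 + \<alpha> * x)"
    using P \<alpha> x by (intro mult_right_mono) auto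
  finally show ?thesis .
qed

lemma powr_one_plus_remainder_bounds:
  fixes x \<alpha> l :: real
  assumes x: "x > 0" and \<alpha>: "0 < \<alpha>" "\<alpha> < 1" and l: "0 \<le> l" "l \<le> 1"
  shows "0 \<le> (1 + x) powr (- \<alpha>) - 1 + \<alpha> * x"
    and "(1 + x) powr (- \<alpha>) - 1 + \<alpha> * x \<le> 2 * x powr (1 + l)"
proof -
  show "0 \<le> (1 + x) powr (- \<alpha>) - 1 + \<alpha> * x"
    using powr_neg_ge_tangent[of "1 + x" \<alpha>] x \<alpha> by simp
  show "(1 + x) powr (- \<alpha>) - 1 + \<alpha> * x \<le> 2 * x powr (1 + l)"
  proof (cases "x \<le> 1")
    case True
    have "x powr 2 \<le> x powr (1 + l)" using x True l by (intro powr_mono') auto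
    then show ?thesis
      using powr_one_plus_neg_le_quadratic[of x \<alpha>] x True \<alpha> by simp
  next
    case False
    have "(1 + x) powr (- \<alpha>) \<le> 1"
      using x \<alpha> by (simp add: powr_minus inverse_le_1_iff ge_one_powr_ge_zero)
    moreover have "x \<le> x powr (1 + l)"
      using False l by (simp add: powr_mono[of 1 "1 + l" x, simplified])
    ultimately show ?thesis
      using x \<alpha> mult_left_le_one_le[of x \<alpha>] by linarith
  qed
qed

lemma powr_one_minus_remainder_bounds:
  fixes x \<alpha> l :: real
  assumes x: "0 < x" "x < 1" and \<alpha>: "0 < \<alpha>" "\<alpha> < 1" and l: "0 \<le> l" "l \<le> 1"
  shows "0 \<le> (1 - x) powr (- \<alpha>) - 1 - \<alpha> * x"
    and "(1 - x) powr (- \<alpha>) - 1 - \<alpha> * x \<le> 4 * (1 - x) powr (- \<alpha>) * x powr (1 + l)"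
proof -
  show "0 \<le> (1 - x) powr (- \<alpha>) - 1 - \<alpha> * x"
    using powr_neg_ge_tangent[of "1 - x" \<alpha>] x \<alpha> by simp
  define P where "P = (1 - x) powr \<alpha>"
  have P: "P > 0" "(1 - x) powr (- \<alpha>) = 1 / P"
    using x by (simp_all add: P_def powr_minus divide_inverse)
  have quadratic: "1 - P * (1 + \<alpha> * x) \<le> 4 * x\<^sup>2"
  proof (cases "x \<le> 1 / 2")
    case True
    then show ?thesis using one_minus_quadratic_le_powr[OF x(1) True \<alpha>] by (simp add: P_def)
  next
    case False
    then have "1 \<le> 4 * x\<^sup>2" using mult_mono[of 1 "2 * x" 1 "2 * x"] by (simp add: power2_eq_square)
    moreover have "P * (1 + \<alpha> * x) \<ge> 0" using P \<alpha> x by simp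
    ultimately show ?thesis by linarith
  qed
  have "x\<^sup>2 \<le> x powr (1 + l)"
    using x l powr_mono'[of "1 + l" 2 x] by simp
  with quadratic have "1 - P * (1 + \<alpha> * x) \<le> 4 * x powr (1 + l)" by linarith
  have "(1 - x) powr (- \<alpha>) - 1 - \<alpha> * x = 1 / P * (1 - P * (1 + \<alpha> * x))"
    using P by (simp add: field_simps)
  also have "\<dots> \<le> 1 / P * (4 * x powr (1 + l))"
    using P \<open>1 - P * (1 + \<alpha> * x) \<le> 4 * x powr (1 + l)\<close> by (intro mult_left_mono) auto
  finally show "(1 - x) powr (- \<alpha>) - 1 - \<alpha> * x \<le> 4 * (1 - x) powr (- \<alpha>) * x powr (1 + l)"
    using P by simp
qed

lemma kernel_remainder_bound_right:
  fixes u h \<alpha> l \<gamma> :: real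
  assumes u: "u > 0" and h: "h > 0" and a: "0 < \<alpha>" "\<alpha> < 1" and l: "0 \<le> l" "l \<le> 1"
  shows "\<bar>(u + h) powr (- \<alpha>) - u powr (- \<alpha>) + \<alpha> * h * u powr (- \<alpha> - 1)\<bar> * u powr \<gamma>
     \<le> 2 * h powr (1 + l) * u powr (\<gamma> - \<alpha> - 1 - l)"
proof -
  define x where "x = h / u"
  have x: "x > 0" using u h by (simp add: x_def)
  have e1: "(u + h) powr (- \<alpha>) = u powr (- \<alpha>) * (1 + x) powr (- \<alpha>)"
  proof -
    have "u + h = u * (1 + x)" using u by (simp add: x_def field_simps)
    then show ?thesis using u x by (simp add: powr_mult)
  qed
  have e2: "\<alpha> * h * u powr (- \<alpha> - 1) = u powr (- \<alpha>) * (\<alpha> * x)"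
    using u by (simp add: x_def powr_diff field_simps)
  have E: "(u + h) powr (- \<alpha>) - u powr (- \<alpha>) + \<alpha> * h * u powr (- \<alpha> - 1)
      = u powr (- \<alpha>) * ((1 + x) powr (- \<alpha>) - 1 + \<alpha> * x)"
    unfolding e1 e2 by (simp add: algebra_simps)
  have b1: "0 \<le> (1 + x) powr (- \<alpha>) - 1 + \<alpha> * x"
    and b2: "(1 + x) powr (- \<alpha>) - 1 + \<alpha> * x \<le> 2 * x powr (1 + l)"
    using powr_one_plus_remainder_bounds[OF x a l] by auto
  have "\<bar>(u + h) powr (- \<alpha>) - u powr (- \<alpha>) + \<alpha> * h * u powr (- \<alpha> - 1)\<bar> * u powr \<gamma>
      = u powr (- \<alpha>) * ((1 + x) powr (- \<alpha>) - 1 + \<alpha> * x) * u powr \<gamma>"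
    unfolding E abs_mult abs_of_nonneg[OF b1] by simp
  also have "\<dots> \<le> u powr (- \<alpha>) * (2 * x powr (1 + l)) * u powr \<gamma>"
    using b2 by (intro mult_right_mono mult_left_mono) auto
  also have "u powr (- \<alpha>) * (2 * x powr (1 + l)) * u powr \<gamma>
      = 2 * h powr (1 + l) * (u powr (- \<alpha>) * u powr \<gamma> / u powr (1 + l))"
    using u h by (simp add: x_def powr_divide)
  also have "u powr (- \<alpha>) * u powr \<gamma> / u powr (1 + l) = u powr (\<gamma> - \<alpha> - 1 - l)"
    by (simp add: powr_add[symmetric] powr_diff[symmetric] algebra_simps)
  finally show ?thesis .
qed

lemma kernel_remainder_bound_left:
  fixes w \<eta> \<alpha> l \<gamma> :: real
  assumes w: "w > \<eta>" and h: "\<eta> > 0" and a: "0 < \<alpha>" "\<alpha> < 1" and l: "0 \<le> l" "l \<le> 1"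
    and g: "\<gamma> \<le> 1 + l"
  shows "\<bar>(w - \<eta>) powr (- \<alpha>) - w powr (- \<alpha>) - \<alpha> * \<eta> * w powr (- \<alpha> - 1)\<bar> * w powr \<gamma>
     \<le> 4 * \<eta> powr (1 + l) * (w - \<eta>) powr (\<gamma> - \<alpha> - 1 - l)"
proof -
  have w0: "w > 0" using w h by simp
  define x where "x = \<eta> / w"
  have x: "0 < x" "x < 1" using w h w0 by (auto simp: x_def)
  have wx: "w - \<eta> = w * (1 - x)" using w0 by (simp add: x_def field_simps)
  have e1: "(w - \<eta>) powr (- \<alpha>) = w powr (- \<alpha>) * (1 - x) powr (- \<alpha>)"
    using w0 x by (simp add: wx powr_mult)
  have e2: "\<alpha> * \<eta> * w powr (- \<alpha> - 1) = w powr (- \<alpha>) * (\<alpha> * x)"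
    using w0 by (simp add: x_def powr_diff field_simps)
  have E: "(w - \<eta>) powr (- \<alpha>) - w powr (- \<alpha>) - \<alpha> * \<eta> * w powr (- \<alpha> - 1)
      = w powr (- \<alpha>) * ((1 - x) powr (- \<alpha>) - 1 - \<alpha> * x)"
    unfolding e1 e2 by (simp add: algebra_simps)
  have b1: "0 \<le> (1 - x) powr (- \<alpha>) - 1 - \<alpha> * x"
    and b2: "(1 - x) powr (- \<alpha>) - 1 - \<alpha> * x \<le> 4 * (1 - x) powr (- \<alpha>) * x powr (1 + l)"
    using powr_one_minus_remainder_bounds[OF x a l] by auto
  have "\<bar>(w - \<eta>) powr (- \<alpha>) - w powr (- \<alpha>) - \<alpha> * \<eta> * w powr (- \<alpha> - 1)\<bar> * w powr \<gamma>
      = w powr (- \<alpha>) * ((1 - x) powr (- \<alpha>) - 1 - \<alpha> * x) * w powr \<gamma>"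
    unfolding E abs_mult abs_of_nonneg[OF b1] by simp
  also have "\<dots> \<le> w powr (- \<alpha>) * (4 * (1 - x) powr (- \<alpha>) * x powr (1 + l)) * w powr \<gamma>"
    using b2 by (intro mult_right_mono mult_left_mono) auto
  also have "\<dots> = 4 * \<eta> powr (1 + l) * ((w - \<eta>) powr (- \<alpha>) * w powr (\<gamma> - 1 - l))"
    using w0 h by (simp add: e1 x_def powr_divide powr_diff diff_diff_eq mult_ac)
  also have "\<dots> \<le> 4 * \<eta> powr (1 + l) * ((w - \<eta>) powr (- \<alpha>) * (w - \<eta>) powr (\<gamma> - 1 - l))"
    using g w h by (intro mult_left_mono powr_mono2') auto
  also have "(w - \<eta>) powr (- \<alpha>) * (w - \<eta>) powr (\<gamma> - 1 - l) = (w - \<eta>) powr (\<gamma> - \<alpha> - 1 - l)"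
    by (simp add: powr_add[symmetric] algebra_simps)
  finally show ?thesis .
qed

section \<open>Differentiating the fractional integral of a function vanishing at t\<close>

lemma has_vector_derivative_if_remainder_le:
  fixes F :: "real \<Rightarrow> 'b::real_normed_vector"
  assumes l: "l > 0" and d: "d > 0"
    and remainder: "\<And>\<tau>. \<tau> \<in> S \<Longrightarrow> \<bar>\<tau> - t\<bar> < d \<Longrightarrow>
      norm (F \<tau> - F t - (\<tau> - t) *\<^sub>R D) \<le> M * \<bar>\<tau> - t\<bar> powr (1 + l)"
  shows "(F has_vector_derivative D) (at t within S)"
proof -
  have "((\<lambda>y. (1 / norm (y - t)) *\<^sub>R (F y - (F t + (y - t) *\<^sub>R D))) \<longlongrightarrow> 0) (at t within S)"
  proof (rule Lim_null_comparison)
    have "norm ((1 / norm (y - t)) *\<^sub>R (F y - (F t + (y - t) *\<^sub>R D))) \<le> M * \<bar>y - t\<bar> powr l"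
      if "y \<in> S" "y \<noteq> t" "dist y t < d" for y
    proof -
      have "norm ((1 / norm (y - t)) *\<^sub>R (F y - (F t + (y - t) *\<^sub>R D)))
          = norm (F y - F t - (y - t) *\<^sub>R D) / \<bar>y - t\<bar>"
        by (simp add: diff_diff_add divide_inverse mult.commute)
      also have "\<dots> \<le> M * \<bar>y - t\<bar> powr (1 + l) / \<bar>y - t\<bar>"
        using remainder[of y] that by (intro divide_right_mono) (auto simp: dist_real_def)
      also have "\<dots> = M * \<bar>y - t\<bar> powr l"
        using that by (simp add: powr_add)
      finally show ?thesis .
    qed
    then show "\<forall>\<^sub>F y in at t within S.
        norm ((1 / norm (y - t)) *\<^sub>R (F y - (F t + (y - t) *\<^sub>R D))) \<le> M * \<bar>y - t\<bar> powr l"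
      using d by (auto simp: eventually_at)
    show "((\<lambda>y. M * \<bar>y - t\<bar> powr l) \<longlongrightarrow> 0) (at t within S)"
      using l by (auto intro!: tendsto_eq_intros)
  qed
  then show ?thesis
    by (simp add: has_vector_derivative_def has_derivative_within bounded_linear_scaleR_left)
qed

locale holder_vanishing =
  fixes R :: "real \<Rightarrow> 'b::banach" and T t \<alpha> \<gamma> C :: real
  assumes t: "0 < t" "t \<le> T"
    and exponents: "0 < \<alpha>" "\<alpha> < \<gamma>" "\<gamma> \<le> 1"
    and R_continuous: "continuous_on {0..T} R"
    and holder_at: "\<And>s. s \<in> {0..T} \<Longrightarrow> norm (R s) \<le> C * \<bar>s - t\<bar> powr \<gamma>"
begin

lemma C_nonneg: "0 \<le> C"
proof -
  have "0 \<le> C * t powr \<gamma>"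
    using holder_at[of 0] t by (auto intro: order_trans[OF norm_ge_zero])
  then show ?thesis
    using t by (simp add: zero_le_mult_iff)
qed

definition J :: "real \<Rightarrow> 'b" where
  "J x = integral {0..x} (\<lambda>s. (x - s) powr (- \<alpha>) *\<^sub>R R s)"

definition L :: 'b where
  "L = integral {0..t} (\<lambda>s. (t - s) powr (- \<alpha> - 1) *\<^sub>R R s)"

lemma J_integrable:
  assumes "0 \<le> a" "a \<le> b" "b \<le> x" "x \<le> T"
  shows "(\<lambda>s. (x - s) powr (- \<alpha>) *\<^sub>R R s) integrable_on {a..b}"
proof (rule integrable_subinterval_real)
  show "(\<lambda>s. (x - s) powr (- \<alpha>) *\<^sub>R R s) integrable_on {0..x}"
    using assms exponents
    by (intro RL_integrand_integrable continuous_on_subset[OF R_continuous]) auto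
qed (use assms in auto)

lemma L_integrable:
  assumes "0 \<le> a" "a \<le> b" "b \<le> t"
  shows "(\<lambda>s. (t - s) powr (- \<alpha> - 1) *\<^sub>R R s) integrable_on {a..b}"
proof (rule integrable_subinterval_real)
  show "(\<lambda>s. (t - s) powr (- \<alpha> - 1) *\<^sub>R R s) integrable_on {0..t}"
  proof (rule singular_kernel_integrable)
    show "continuous_on {0..t} R" using t by (auto intro: continuous_on_subset[OF R_continuous])
    show "norm (R s) \<le> C * (t - s) powr \<gamma>" if "s \<in> {0..<t}" for s
      using holder_at[of s] that t by (simp add: abs_of_neg)
  qed (use t exponents in auto)
qed (use assms in auto)

lemma norm_integral_le:
  assumes "(\<lambda>s. w s *\<^sub>R R s) integrable_on {a..b}" and "0 \<le> a" "a \<le> b" "b \<le> T" "q > -1"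
    and w: "\<And>s. s \<in> {a..<b} \<Longrightarrow> \<bar>w s\<bar> * \<bar>s - t\<bar> powr \<gamma> \<le> K * (b - s) powr q"
  shows "norm (integral {a..b} (\<lambda>s. w s *\<^sub>R R s)) \<le> C * K * ((b - a) powr (q + 1) / (q + 1))"
proof -
  \<comment> \<open>The hypothesis excludes \<open>s = b\<close>, where \<open>(b - s) powr q = 0\<close> even for \<open>q < 0\<close>.\<close>
  define f where "f s = (if s = b then 0 else w s *\<^sub>R R s)" for s
  have "integral {a..b} (\<lambda>s. w s *\<^sub>R R s) = integral {a..b} f"
    by (rule integral_spike[of "{b}"]) (auto simp: f_def)
  also have "norm \<dots> \<le> integral {a..b} (\<lambda>s. C * K * (b - s) powr q)"
  proof (rule integral_norm_bound_integral)
    show "f integrable_on {a..b}"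
      by (rule integrable_spike[OF assms(1), of "{b}"]) (auto simp: f_def)
    show "(\<lambda>s. C * K * (b - s) powr q) integrable_on {a..b}"
      using powr_kernel_integrable[of a b q] assms by (intro integrable_on_mult_right) auto
    fix s assume s: "s \<in> {a..b}"
    show "norm (f s) \<le> C * K * (b - s) powr q"
    proof (cases "s = b")
      case False
      then have "s \<in> {a..<b}" using s by auto
      have "norm (f s) = \<bar>w s\<bar> * norm (R s)" using False by (simp add: f_def)
      also have "\<dots> \<le> \<bar>w s\<bar> * (C * \<bar>s - t\<bar> powr \<gamma>)"
        using holder_at[of s] s assms by (intro mult_left_mono) auto
      also have "\<dots> = C * (\<bar>w s\<bar> * \<bar>s - t\<bar> powr \<gamma>)" by simp
      also have "\<dots> \<le> C * (K * (b - s) powr q)"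
        using w[OF \<open>s \<in> {a..<b}\<close>] C_nonneg by (intro mult_left_mono)
      finally show ?thesis by simp
    qed (simp add: f_def)
  qed
  also have "\<dots> = C * K * ((b - a) powr (q + 1) / (q + 1))"
    using powr_kernel_integral[of a b q] assms by simp
  finally show ?thesis .
qed

lemma J_right_decomposition:
  assumes "0 < h" "t + h \<le> T"
  shows "J (t + h) - J t - h *\<^sub>R (- \<alpha> *\<^sub>R L)
    = integral {t..t + h} (\<lambda>s. (t + h - s) powr (- \<alpha>) *\<^sub>R R s)
    + integral {0..t} (\<lambda>s. ((t + h - s) powr (- \<alpha>) - (t - s) powr (- \<alpha>)
        + \<alpha> * h * (t - s) powr (- \<alpha> - 1)) *\<^sub>R R s)"
proof -
  let ?f = "\<lambda>x s. (x - s) powr (- \<alpha>) *\<^sub>R R s"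
  let ?G = "\<lambda>s. (t - s) powr (- \<alpha> - 1) *\<^sub>R R s"
  have int: "?f (t + h) integrable_on {0..t}" "?f t integrable_on {0..t}" "?G integrable_on {0..t}"
    using assms t by (auto intro!: J_integrable L_integrable)
  have "J (t + h) = integral {0..t} (?f (t + h)) + integral {t..t + h} (?f (t + h))"
    unfolding J_def
    by (rule Henstock_Kurzweil_Integration.integral_combine[symmetric])
      (use assms t in \<open>auto intro: J_integrable\<close>)
  moreover have "(\<lambda>s. ((t + h - s) powr (- \<alpha>) - (t - s) powr (- \<alpha>)
        + \<alpha> * h * (t - s) powr (- \<alpha> - 1)) *\<^sub>R R s)
      = (\<lambda>s. (?f (t + h) s - ?f t s) + (\<alpha> * h) *\<^sub>R ?G s)"
    by (simp add: fun_eq_iff scaleR_add_left scaleR_diff_left)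
  moreover have "integral {0..t} (\<lambda>s. (?f (t + h) s - ?f t s) + (\<alpha> * h) *\<^sub>R ?G s)
      = integral {0..t} (?f (t + h)) - J t + (\<alpha> * h) *\<^sub>R L"
    unfolding J_def L_def
    by (intro integral_unique has_integral_add has_integral_diff has_integral_cmul
        integrable_integral int)
  ultimately show ?thesis by (simp add: algebra_simps)
qed

lemma norm_integral_right_near_le:
  assumes h: "0 < h" "h \<le> 1" "t + h \<le> T"
  defines "l \<equiv> (\<gamma> - \<alpha>) / 2"
  shows "norm (integral {t..t + h} (\<lambda>s. (t + h - s) powr (- \<alpha>) *\<^sub>R R s))
    \<le> C / (1 - \<alpha>) * h powr (1 + l)"
proof -
  have l: "0 < l" "\<gamma> = \<alpha> + 2 * l" using exponents by (auto simp: l_def field_simps)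
  have "norm (integral {t..t + h} (\<lambda>s. (t + h - s) powr (- \<alpha>) *\<^sub>R R s))
      \<le> C * h powr \<gamma> * ((t + h - t) powr (- \<alpha> + 1) / (- \<alpha> + 1))"
  proof (rule norm_integral_le)
    fix s assume s: "s \<in> {t..<t + h}"
    have "\<bar>s - t\<bar> powr \<gamma> \<le> h powr \<gamma>"
      using s exponents by (intro powr_mono2) auto
    from mult_right_mono[OF this, of "(t + h - s) powr (- \<alpha>)"]
    show "\<bar>(t + h - s) powr (- \<alpha>)\<bar> * \<bar>s - t\<bar> powr \<gamma> \<le> h powr \<gamma> * (t + h - s) powr (- \<alpha>)"
      by (simp add: mult.commute)
  qed (use h t exponents in \<open>auto intro!: J_integrable\<close>)
  also have "\<dots> = C / (1 - \<alpha>) * h powr (1 + 2 * l)"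
    using l by (simp add: powr_add[symmetric] algebra_simps)
  also have "\<dots> \<le> C / (1 - \<alpha>) * h powr (1 + l)"
    using h l C_nonneg exponents by (intro mult_left_mono powr_mono') auto
  finally show ?thesis .
qed

lemma norm_integral_right_far_le:
  assumes h: "0 < h" "t + h \<le> T"
  defines "l \<equiv> (\<gamma> - \<alpha>) / 2"
  shows "norm (integral {0..t} (\<lambda>s. ((t + h - s) powr (- \<alpha>) - (t - s) powr (- \<alpha>)
      + \<alpha> * h * (t - s) powr (- \<alpha> - 1)) *\<^sub>R R s)) \<le> 2 * C * t powr l / l * h powr (1 + l)"
proof -
  have l: "0 < l" "l \<le> 1" using exponents by (auto simp: l_def)
  have "norm (integral {0..t} (\<lambda>s. ((t + h - s) powr (- \<alpha>) - (t - s) powr (- \<alpha>)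
      + \<alpha> * h * (t - s) powr (- \<alpha> - 1)) *\<^sub>R R s))
      \<le> C * (2 * h powr (1 + l)) * ((t - 0) powr (l - 1 + 1) / (l - 1 + 1))"
  proof (rule norm_integral_le)
    fix s assume s: "s \<in> {0..<t}"
    have eqs: "t - s + h = t + h - s" "\<gamma> - \<alpha> - 1 - l = l - 1" "\<bar>s - t\<bar> = t - s"
      using s by (auto simp: l_def field_simps)
    have "\<bar>(t - s + h) powr (- \<alpha>) - (t - s) powr (- \<alpha>) + \<alpha> * h * (t - s) powr (- \<alpha> - 1)\<bar>
        * (t - s) powr \<gamma> \<le> 2 * h powr (1 + l) * (t - s) powr (\<gamma> - \<alpha> - 1 - l)"
      using s h exponents l by (intro kernel_remainder_bound_right) auto
    then show "\<bar>(t + h - s) powr (- \<alpha>) - (t - s) powr (- \<alpha>) + \<alpha> * h * (t - s) powr (- \<alpha> - 1)\<bar>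
        * \<bar>s - t\<bar> powr \<gamma> \<le> 2 * h powr (1 + l) * (t - s) powr (l - 1)"
      unfolding eqs .
  qed (use h t exponents l in \<open>auto intro!: J_integrable L_integrable integrable_add
        integrable_diff integrable_cmul simp: scaleR_add_left scaleR_diff_left
        simp flip: scaleR_scaleR\<close>)
  then show ?thesis by (simp add: mult_ac)
qed

lemma J_right_remainder:
  assumes h: "0 < h" "h \<le> 1" "t + h \<le> T"
  defines "l \<equiv> (\<gamma> - \<alpha>) / 2"
  shows "norm (J (t + h) - J t - h *\<^sub>R (- \<alpha> *\<^sub>R L))
    \<le> (C / (1 - \<alpha>) + 2 * C * t powr l / l) * h powr (1 + l)"
  unfolding J_right_decomposition[OF h(1,3)] l_def
  using norm_triangle_le[OF add_mono[OF norm_integral_right_near_le[OF h]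
      norm_integral_right_far_le[OF h(1,3)]]]
  by (simp add: algebra_simps)

lemma J_left_decomposition:
  assumes "0 < \<eta>" "\<eta> \<le> t"
  shows "J (t - \<eta>) - J t - (- \<eta>) *\<^sub>R (- \<alpha> *\<^sub>R L)
    = integral {0..t - \<eta>} (\<lambda>s. ((t - \<eta> - s) powr (- \<alpha>) - (t - s) powr (- \<alpha>)
        - \<alpha> * \<eta> * (t - s) powr (- \<alpha> - 1)) *\<^sub>R R s)
    - integral {t - \<eta>..t} (\<lambda>s. (t - s) powr (- \<alpha>) *\<^sub>R R s)
    - (\<alpha> * \<eta>) *\<^sub>R integral {t - \<eta>..t} (\<lambda>s. (t - s) powr (- \<alpha> - 1) *\<^sub>R R s)"
proof -
  let ?f = "\<lambda>x s. (x - s) powr (- \<alpha>) *\<^sub>R R s"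
  let ?G = "\<lambda>s. (t - s) powr (- \<alpha> - 1) *\<^sub>R R s"
  have int: "?f (t - \<eta>) integrable_on {0..t - \<eta>}" "?f t integrable_on {0..t - \<eta>}"
      "?G integrable_on {0..t - \<eta>}"
    using assms t by (auto intro!: J_integrable L_integrable)
  have "J t = integral {0..t - \<eta>} (?f t) + integral {t - \<eta>..t} (?f t)"
    unfolding J_def
    by (rule Henstock_Kurzweil_Integration.integral_combine[symmetric])
      (use assms t in \<open>auto intro: J_integrable\<close>)
  moreover have "L = integral {0..t - \<eta>} ?G + integral {t - \<eta>..t} ?G"
    unfolding L_def
    by (rule Henstock_Kurzweil_Integration.integral_combine[symmetric])
      (use assms t in \<open>auto intro: L_integrable\<close>)
  moreover have "(\<lambda>s. ((t - \<eta> - s) powr (- \<alpha>) - (t - s) powr (- \<alpha>)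
        - \<alpha> * \<eta> * (t - s) powr (- \<alpha> - 1)) *\<^sub>R R s)
      = (\<lambda>s. (?f (t - \<eta>) s - ?f t s) - (\<alpha> * \<eta>) *\<^sub>R ?G s)"
    by (simp add: fun_eq_iff scaleR_diff_left)
  moreover have "integral {0..t - \<eta>} (\<lambda>s. (?f (t - \<eta>) s - ?f t s) - (\<alpha> * \<eta>) *\<^sub>R ?G s)
      = J (t - \<eta>) - integral {0..t - \<eta>} (?f t) - (\<alpha> * \<eta>) *\<^sub>R integral {0..t - \<eta>} ?G"
    unfolding J_def
    by (intro integral_unique has_integral_diff has_integral_cmul integrable_integral int)
  ultimately show ?thesis by (simp add: algebra_simps)
qed

lemma norm_integral_left_near_le:
  assumes \<eta>: "0 < \<eta>" "\<eta> \<le> t" and p: "p + \<gamma> > -1"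
  shows "norm (integral {t - \<eta>..t} (\<lambda>s. (t - s) powr p *\<^sub>R R s))
    \<le> C * (\<eta> powr (p + \<gamma> + 1) / (p + \<gamma> + 1))"
proof -
  have "norm (integral {t - \<eta>..t} (\<lambda>s. (t - s) powr p *\<^sub>R R s))
      \<le> C * 1 * ((t - (t - \<eta>)) powr (p + \<gamma> + 1) / (p + \<gamma> + 1))"
  proof (rule norm_integral_le)
    fix s assume "s \<in> {t - \<eta>..<t}"
    then show "\<bar>(t - s) powr p\<bar> * \<bar>s - t\<bar> powr \<gamma> \<le> 1 * (t - s) powr (p + \<gamma>)"
      by (simp add: abs_minus_commute powr_add)
  next
    show "(\<lambda>s. (t - s) powr p *\<^sub>R R s) integrable_on {t - \<eta>..t}"
    proof (rule singular_kernel_integrable)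
      show "continuous_on {t - \<eta>..t} R"
        using \<eta> t by (auto intro: continuous_on_subset[OF R_continuous])
      show "norm (R s) \<le> C * (t - s) powr \<gamma>" if "s \<in> {t - \<eta>..<t}" for s
        using holder_at[of s] that \<eta> t by (simp add: abs_of_neg)
    qed (use \<eta> p in auto)
  qed (use \<eta> t p in auto)
  then show ?thesis by simp
qed

lemma norm_integral_left_far_le:
  assumes \<eta>: "0 < \<eta>" "\<eta> \<le> t"
  defines "l \<equiv> (\<gamma> - \<alpha>) / 2"
  shows "norm (integral {0..t - \<eta>} (\<lambda>s. ((t - \<eta> - s) powr (- \<alpha>) - (t - s) powr (- \<alpha>)
      - \<alpha> * \<eta> * (t - s) powr (- \<alpha> - 1)) *\<^sub>R R s)) \<le> 4 * C * t powr l / l * \<eta> powr (1 + l)"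
proof -
  have l: "0 < l" "l \<le> 1" "\<gamma> \<le> 1 + l" using exponents by (simp_all add: l_def field_simps)
  have "norm (integral {0..t - \<eta>} (\<lambda>s. ((t - \<eta> - s) powr (- \<alpha>) - (t - s) powr (- \<alpha>)
      - \<alpha> * \<eta> * (t - s) powr (- \<alpha> - 1)) *\<^sub>R R s))
      \<le> C * (4 * \<eta> powr (1 + l)) * ((t - \<eta> - 0) powr (l - 1 + 1) / (l - 1 + 1))"
  proof (rule norm_integral_le)
    fix s assume s: "s \<in> {0..<t - \<eta>}"
    have eqs: "t - s - \<eta> = t - \<eta> - s" "\<gamma> - \<alpha> - 1 - l = l - 1" "\<bar>s - t\<bar> = t - s"
      using s \<eta> by (auto simp: l_def field_simps)
    have "\<bar>(t - s - \<eta>) powr (- \<alpha>) - (t - s) powr (- \<alpha>) - \<alpha> * \<eta> * (t - s) powr (- \<alpha> - 1)\<bar>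
        * (t - s) powr \<gamma> \<le> 4 * \<eta> powr (1 + l) * (t - s - \<eta>) powr (\<gamma> - \<alpha> - 1 - l)"
      using s \<eta> exponents l by (intro kernel_remainder_bound_left) auto
    then show "\<bar>(t - \<eta> - s) powr (- \<alpha>) - (t - s) powr (- \<alpha>) - \<alpha> * \<eta> * (t - s) powr (- \<alpha> - 1)\<bar>
        * \<bar>s - t\<bar> powr \<gamma> \<le> 4 * \<eta> powr (1 + l) * (t - \<eta> - s) powr (l - 1)"
      unfolding eqs .
  qed (use \<eta> t exponents l in \<open>auto intro!: J_integrable L_integrable integrable_diff
        integrable_cmul simp: scaleR_diff_left simp flip: scaleR_scaleR\<close>)
  also have "\<dots> \<le> C * (4 * \<eta> powr (1 + l)) * (t powr l / l)"
    using \<eta> l C_nonneg powr_mono2[of l "t - \<eta>" t] by (auto intro!: mult_left_mono divide_right_mono)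
  finally show ?thesis by (simp add: mult_ac)
qed

lemma J_left_remainder:
  assumes \<eta>: "0 < \<eta>" "\<eta> \<le> 1" "\<eta> \<le> t"
  defines "l \<equiv> (\<gamma> - \<alpha>) / 2"
  shows "norm (J (t - \<eta>) - J t - (- \<eta>) *\<^sub>R (- \<alpha> *\<^sub>R L))
    \<le> (4 * C * t powr l / l + C + \<alpha> * C / (2 * l)) * \<eta> powr (1 + l)"
proof -
  have l: "0 < l" "\<gamma> = \<alpha> + 2 * l" using exponents by (auto simp: l_def field_simps)
  have small: "\<eta> powr (1 + 2 * l) \<le> \<eta> powr (1 + l)"
    using \<eta> l by (intro powr_mono') auto
  have "norm (integral {t - \<eta>..t} (\<lambda>s. (t - s) powr (- \<alpha>) *\<^sub>R R s))
      \<le> C * (\<eta> powr (1 + 2 * l) / (1 + 2 * l))"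
    using norm_integral_left_near_le[OF \<eta>(1,3), of "- \<alpha>"] l exponents by (simp add: add_ac)
  also have "\<dots> \<le> C * \<eta> powr (1 + l)"
  proof -
    have "\<eta> powr (1 + l) * 1 \<le> \<eta> powr (1 + l) * (1 + 2 * l)"
      using l by (intro mult_left_mono) auto
    then have "\<eta> powr (1 + 2 * l) / (1 + 2 * l) \<le> \<eta> powr (1 + l)"
      using small l by (simp add: divide_le_eq)
    then show ?thesis using C_nonneg by (intro mult_left_mono)
  qed
  finally have near:
    "norm (integral {t - \<eta>..t} (\<lambda>s. (t - s) powr (- \<alpha>) *\<^sub>R R s)) \<le> C * \<eta> powr (1 + l)" .
  have "norm (integral {t - \<eta>..t} (\<lambda>s. (t - s) powr (- \<alpha> - 1) *\<^sub>R R s))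
      \<le> C * (\<eta> powr (2 * l) / (2 * l))"
    using norm_integral_left_near_le[OF \<eta>(1,3), of "- \<alpha> - 1"] l exponents by simp
  then have "\<alpha> * \<eta> * norm (integral {t - \<eta>..t} (\<lambda>s. (t - s) powr (- \<alpha> - 1) *\<^sub>R R s))
      \<le> \<alpha> * \<eta> * (C * (\<eta> powr (2 * l) / (2 * l)))"
    using \<eta> exponents by (intro mult_left_mono) auto
  then have "norm ((\<alpha> * \<eta>) *\<^sub>R integral {t - \<eta>..t} (\<lambda>s. (t - s) powr (- \<alpha> - 1) *\<^sub>R R s))
      \<le> \<alpha> * C / (2 * l) * \<eta> powr (1 + 2 * l)"
    using \<eta> exponents by (simp add: powr_add mult_ac)
  also have "\<dots> \<le> \<alpha> * C / (2 * l) * \<eta> powr (1 + l)"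
    using small exponents l C_nonneg by (intro mult_left_mono) auto
  finally have near': "norm ((\<alpha> * \<eta>) *\<^sub>R integral {t - \<eta>..t} (\<lambda>s. (t - s) powr (- \<alpha> - 1) *\<^sub>R R s))
      \<le> \<alpha> * C / (2 * l) * \<eta> powr (1 + l)" .
  have triangle: "norm (a - b - c) \<le> norm a + norm b + norm c" for a b c :: 'b
    using norm_triangle_ineq4[of "a - b" c] norm_triangle_ineq4[of a b] by linarith
  show ?thesis
    unfolding J_left_decomposition[OF \<eta>(1,3)]
    using order_trans[OF triangle add_mono[OF add_mono[OF norm_integral_left_far_le[OF \<eta>(1,3)]
          near] near']]
    by (simp add: distrib_right l_def)
qed

lemma J_has_vector_derivative: "(J has_vector_derivative - \<alpha> *\<^sub>R L) (at t within {0..T})"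
proof -
  define l where "l = (\<gamma> - \<alpha>) / 2"
  define M where
    "M = (C / (1 - \<alpha>) + 2 * C * t powr l / l) + (4 * C * t powr l / l + C + \<alpha> * C / (2 * l))"
  have l: "l > 0" using exponents by (simp add: l_def)
  have "0 \<le> C / (1 - \<alpha>) + 2 * C * t powr l / l" "0 \<le> 4 * C * t powr l / l + C + \<alpha> * C / (2 * l)"
    using C_nonneg exponents l by auto
  then have M: "C / (1 - \<alpha>) + 2 * C * t powr l / l \<le> M"
      "4 * C * t powr l / l + C + \<alpha> * C / (2 * l) \<le> M"
    unfolding M_def by linarith+
  show ?thesis
  proof (rule has_vector_derivative_if_remainder_le[OF l zero_less_one])
    fix \<tau> assume \<tau>: "\<tau> \<in> {0..T}" "\<bar>\<tau> - t\<bar> < 1"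
    consider "t < \<tau>" | "\<tau> = t" | "\<tau> < t" by linarith
    then show "norm (J \<tau> - J t - (\<tau> - t) *\<^sub>R (- \<alpha> *\<^sub>R L)) \<le> M * \<bar>\<tau> - t\<bar> powr (1 + l)"
    proof cases
      case 1
      have "norm (J \<tau> - J t - (\<tau> - t) *\<^sub>R (- \<alpha> *\<^sub>R L))
          \<le> (C / (1 - \<alpha>) + 2 * C * t powr l / l) * (\<tau> - t) powr (1 + l)"
        using J_right_remainder[of "\<tau> - t"] \<tau> 1 by (simp add: l_def)
      also have "\<dots> \<le> M * (\<tau> - t) powr (1 + l)"
        using M(1) by (intro mult_right_mono) auto
      finally show ?thesis using 1 by simp
    next
      case 3
      have "norm (J \<tau> - J t - (\<tau> - t) *\<^sub>R (- \<alpha> *\<^sub>R L))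
          \<le> (4 * C * t powr l / l + C + \<alpha> * C / (2 * l)) * (t - \<tau>) powr (1 + l)"
        using J_left_remainder[of "t - \<tau>"] \<tau> 3 by (simp add: l_def)
      also have "\<dots> \<le> M * (t - \<tau>) powr (1 + l)"
        using M(2) by (intro mult_right_mono) auto
      finally show ?thesis using 3 by simp
    qed simp
  qed
qed

lemma RL_J1_has_vector_derivative:
  "((\<lambda>\<tau>. RL_J1 \<alpha> R \<tau>) has_vector_derivative - (\<alpha> / Gamma (1 - \<alpha>)) *\<^sub>R L) (at t within {0..T})"
  using bounded_linear.has_vector_derivative[OF bounded_linear_scaleR_right J_has_vector_derivative,
      of "1 / Gamma (1 - \<alpha>)"]
  by (simp add: RL_J1_def J_def)

end

lemma RL_J1_const:
  assumes "0 \<le> x" "\<alpha> < 1"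
  shows "RL_J1 \<alpha> (\<lambda>_. c) x = (x powr (1 - \<alpha>) / ((1 - \<alpha>) * Gamma (1 - \<alpha>))) *\<^sub>R c"
proof -
  have "((\<lambda>s. (x - s) powr (- \<alpha>) *\<^sub>R c) has_integral (x powr (1 - \<alpha>) / (1 - \<alpha>)) *\<^sub>R c) {0..x}"
    using has_integral_scaleR_left[OF powr_kernel_has_integral[of 0 x "- \<alpha>"]] assms by simp
  then show ?thesis
    by (simp add: RL_J1_def integral_unique)
qed

lemma RL_J1_const_has_vector_derivative:
  assumes "0 < t" "t \<le> T" "\<alpha> < 1"
  shows "((\<lambda>\<tau>. RL_J1 \<alpha> (\<lambda>_. c) \<tau>) has_vector_derivative (t powr (- \<alpha>) / Gamma (1 - \<alpha>)) *\<^sub>R c)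
    (at t within {0..T})"
proof (rule has_vector_derivative_transform_within[OF _ zero_less_one])
  have "((\<lambda>\<tau>. \<tau> powr (1 - \<alpha>)) has_real_derivative (1 - \<alpha>) * t powr (- \<alpha>)) (at t within {0..T})"
    using assms by (auto intro!: derivative_eq_intros)
  from DERIV_cdivide[OF this, of "(1 - \<alpha>) * Gamma (1 - \<alpha>)"]
  have "((\<lambda>\<tau>. \<tau> powr (1 - \<alpha>) / ((1 - \<alpha>) * Gamma (1 - \<alpha>))) has_real_derivative
      t powr (- \<alpha>) / Gamma (1 - \<alpha>)) (at t within {0..T})"
    using assms by simp
  then show "((\<lambda>\<tau>. (\<tau> powr (1 - \<alpha>) / ((1 - \<alpha>) * Gamma (1 - \<alpha>))) *\<^sub>R c) has_vector_derivative
      (t powr (- \<alpha>) / Gamma (1 - \<alpha>)) *\<^sub>R c) (at t within {0..T})"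
    by (rule has_vector_derivative_scaleR[OF _ has_vector_derivative_const, simplified])
qed (use assms in \<open>auto simp: RL_J1_const\<close>)

lemma RL_J1_add:
  assumes "(\<lambda>s. (x - s) powr (- \<alpha>) *\<^sub>R f s) integrable_on {0..x}"
    and "(\<lambda>s. (x - s) powr (- \<alpha>) *\<^sub>R g s) integrable_on {0..x}"
  shows "RL_J1 \<alpha> (\<lambda>s. f s + g s) x = RL_J1 \<alpha> f x + RL_J1 \<alpha> g x"
  using integral_add[OF assms] by (simp add: RL_J1_def scaleR_add_right)

lemma holder_space_imp_RL_D_exists:
  fixes f :: "real \<Rightarrow> 'a::{real_normed_vector, complete_space}"
  assumes t: "0 < t" "t \<le> T" and exponents: "0 < \<alpha>" "\<alpha> < \<beta>" "\<beta> \<le> 1"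
    and holder: "holder_space \<beta> T f"
  shows "RL_D_exists T \<alpha> f t"
proof -
  define g where "g s = wrap (f s)" for s
  obtain M where cont: "continuous_on {0..T} g" and M: "M > 0"
    and M_holder: "\<forall>x\<in>{0..T}. \<forall>y\<in>{0..T}. norm (g x - g y) \<le> M * \<bar>x - y\<bar> powr \<beta>"
    using holder_space_wrap[OF holder] unfolding holder_space_def g_def by auto
  interpret R: holder_vanishing "\<lambda>s. g s - g t" T t \<alpha> \<beta> M
    by unfold_locales (use t exponents cont M M_holder in \<open>auto intro!: continuous_intros\<close>)
  have split: "RL_J1 \<alpha> g \<tau> = RL_J1 \<alpha> (\<lambda>_. g t) \<tau> + RL_J1 \<alpha> (\<lambda>s. g s - g t) \<tau>"
    if "\<tau> \<in> {0..T}" for \<tau>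
  proof -
    have "continuous_on {0..\<tau>} g" using that by (auto intro: continuous_on_subset[OF cont])
    then have "RL_J1 \<alpha> (\<lambda>s. g t + (g s - g t)) \<tau> = RL_J1 \<alpha> (\<lambda>_. g t) \<tau> + RL_J1 \<alpha> (\<lambda>s. g s - g t) \<tau>"
      using that exponents
      by (intro RL_J1_add RL_integrand_integrable) (auto intro!: continuous_intros)
    then show ?thesis by simp
  qed
  have "((\<lambda>\<tau>. RL_J1 \<alpha> (\<lambda>_. g t) \<tau> + RL_J1 \<alpha> (\<lambda>s. g s - g t) \<tau>) has_vector_derivative
      (t powr (- \<alpha>) / Gamma (1 - \<alpha>)) *\<^sub>R g t + - (\<alpha> / Gamma (1 - \<alpha>)) *\<^sub>R R.L) (at t within {0..T})"
    using t exponents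
    by (intro has_vector_derivative_add RL_J1_const_has_vector_derivative
        R.RL_J1_has_vector_derivative) auto
  then have "((\<lambda>\<tau>. RL_J1 \<alpha> g \<tau>) has_vector_derivative
      (t powr (- \<alpha>) / Gamma (1 - \<alpha>)) *\<^sub>R g t + - (\<alpha> / Gamma (1 - \<alpha>)) *\<^sub>R R.L) (at t within {0..T})"
    by (rule has_vector_derivative_transform_within[OF _ zero_less_one]) (use t split in auto)
  then have "RL_D_exists T \<alpha> g t"
    unfolding RL_D_exists_def by (rule differentiableI_vector)
  then show ?thesis
    unfolding g_def by (rule RL_D_exists_unwrap)
qed

lemma RL_J1_diff:
  assumes "(\<lambda>s. (x - s) powr (- \<alpha>) *\<^sub>R f s) integrable_on {0..x}"
    and "(\<lambda>s. (x - s) powr (- \<alpha>) *\<^sub>R g s) integrable_on {0..x}"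
  shows "RL_J1 \<alpha> (\<lambda>s. f s - g s) x = RL_J1 \<alpha> f x - RL_J1 \<alpha> g x"
  using integral_diff[OF assms] by (simp add: RL_J1_def scaleR_diff_right)

lemma RL_J1_bounded_linear:
  assumes "bounded_linear g" and "(\<lambda>s. (x - s) powr (- \<alpha>) *\<^sub>R f s) integrable_on {0..x}"
  shows "RL_J1 \<alpha> (\<lambda>s. g (f s)) x = g (RL_J1 \<alpha> f x)"
proof -
  interpret g: bounded_linear g by fact
  show ?thesis
    using integral_linear[OF assms(2,1)] by (simp add: RL_J1_def o_def g.scaleR)
qed

lemma RL_J1_inner_decomposition:
  fixes f1 f2 :: "real \<Rightarrow> 'a::{real_inner, complete_space}"
  assumes x: "0 \<le> x" and cont: "continuous_on {0..x} f1" "continuous_on {0..x} f2" and "\<alpha> < 1"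
  shows "RL_J1 \<alpha> (\<lambda>s. inner (f1 s) (f2 s)) x
    = inner (RL_J1 \<alpha> f1 x) (f2 t) + inner (f1 t) (RL_J1 \<alpha> f2 x)
      + RL_J1 \<alpha> (\<lambda>s. inner (f1 s - f1 t) (f2 s - f2 t)) x - RL_J1 \<alpha> (\<lambda>_. inner (f1 t) (f2 t)) x"
proof -
  have int: "(\<lambda>s. (x - s) powr (- \<alpha>) *\<^sub>R g s) integrable_on {0..x}"
    if "continuous_on {0..x} g" for g :: "real \<Rightarrow> 'b::{real_normed_vector, complete_space}"
    using RL_integrand_integrable[OF x that \<open>\<alpha> < 1\<close>] .
  have "RL_J1 \<alpha> (\<lambda>s. inner (f1 s) (f2 s)) x = RL_J1 \<alpha> (\<lambda>s. inner (f1 s) (f2 t) + inner (f1 t) (f2 s)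
      + inner (f1 s - f1 t) (f2 s - f2 t) - inner (f1 t) (f2 t)) x"
    by (simp add: inner_diff_left inner_diff_right)
  also have "\<dots> = RL_J1 \<alpha> (\<lambda>s. inner (f1 s) (f2 t)) x + RL_J1 \<alpha> (\<lambda>s. inner (f1 t) (f2 s)) x
      + RL_J1 \<alpha> (\<lambda>s. inner (f1 s - f1 t) (f2 s - f2 t)) x - RL_J1 \<alpha> (\<lambda>_. inner (f1 t) (f2 t)) x"
  proof -
    have "RL_J1 \<alpha> (\<lambda>s. inner (f1 s) (f2 t) + inner (f1 t) (f2 s) + inner (f1 s - f1 t) (f2 s - f2 t)
        - inner (f1 t) (f2 t)) x = RL_J1 \<alpha> (\<lambda>s. inner (f1 s) (f2 t) + inner (f1 t) (f2 s)
        + inner (f1 s - f1 t) (f2 s - f2 t)) x - RL_J1 \<alpha> (\<lambda>_. inner (f1 t) (f2 t)) x"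
      by (rule RL_J1_diff; rule int) (use cont in \<open>auto intro!: continuous_intros\<close>)
    moreover have "RL_J1 \<alpha> (\<lambda>s. inner (f1 s) (f2 t) + inner (f1 t) (f2 s)
        + inner (f1 s - f1 t) (f2 s - f2 t)) x
        = RL_J1 \<alpha> (\<lambda>s. inner (f1 s) (f2 t) + inner (f1 t) (f2 s)) x
        + RL_J1 \<alpha> (\<lambda>s. inner (f1 s - f1 t) (f2 s - f2 t)) x"
      by (rule RL_J1_add; rule int) (use cont in \<open>auto intro!: continuous_intros\<close>)
    moreover have "RL_J1 \<alpha> (\<lambda>s. inner (f1 s) (f2 t) + inner (f1 t) (f2 s)) x
        = RL_J1 \<alpha> (\<lambda>s. inner (f1 s) (f2 t)) x + RL_J1 \<alpha> (\<lambda>s. inner (f1 t) (f2 s)) x"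
      by (rule RL_J1_add; rule int) (use cont in \<open>auto intro!: continuous_intros\<close>)
    ultimately show ?thesis by simp
  qed
  also have "RL_J1 \<alpha> (\<lambda>s. inner (f1 s) (f2 t)) x = inner (RL_J1 \<alpha> f1 x) (f2 t)"
    by (rule RL_J1_bounded_linear[OF bounded_linear_inner_left int[OF cont(1)]])
  also have "RL_J1 \<alpha> (\<lambda>s. inner (f1 t) (f2 s)) x = inner (f1 t) (RL_J1 \<alpha> f2 x)"
    by (rule RL_J1_bounded_linear[OF bounded_linear_inner_right int[OF cont(2)]])
  finally show ?thesis .
qed

lemma RL_J1_inner_has_vector_derivative:
  fixes f1 f2 :: "real \<Rightarrow> 'a::{real_inner, complete_space}"
  assumes t: "0 < t" "t \<le> T" and exponents: "0 < \<alpha>" "\<alpha> < \<gamma>" "\<gamma> \<le> 1"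
    and cont: "continuous_on {0..T} f1" "continuous_on {0..T} f2"
    and D1: "((\<lambda>\<tau>. RL_J1 \<alpha> f1 \<tau>) has_vector_derivative D1) (at t within {0..T})"
    and D2: "((\<lambda>\<tau>. RL_J1 \<alpha> f2 \<tau>) has_vector_derivative D2) (at t within {0..T})"
    and bound: "\<And>s. s \<in> {0..T} \<Longrightarrow> \<bar>inner (f1 s - f1 t) (f2 s - f2 t)\<bar> \<le> C * \<bar>s - t\<bar> powr \<gamma>"
  shows "((\<lambda>\<tau>. RL_J1 \<alpha> (\<lambda>s. inner (f1 s) (f2 s)) \<tau>) has_vector_derivative
      inner D1 (f2 t) + inner (f1 t) D2
      - \<alpha> / Gamma (1 - \<alpha>)
        * integral {0..t} (\<lambda>s. (t - s) powr (- \<alpha> - 1) * inner (f1 s - f1 t) (f2 s - f2 t))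
      - t powr (- \<alpha>) / Gamma (1 - \<alpha>) * inner (f1 t) (f2 t)) (at t within {0..T})"
proof -
  interpret R: holder_vanishing "\<lambda>s. inner (f1 s - f1 t) (f2 s - f2 t)" T t \<alpha> \<gamma> C
    by unfold_locales (use assms in \<open>auto intro!: continuous_intros\<close>)
  have "((\<lambda>\<tau>. inner (RL_J1 \<alpha> f1 \<tau>) (f2 t) + inner (f1 t) (RL_J1 \<alpha> f2 \<tau>)
      + RL_J1 \<alpha> (\<lambda>s. inner (f1 s - f1 t) (f2 s - f2 t)) \<tau> - RL_J1 \<alpha> (\<lambda>_. inner (f1 t) (f2 t)) \<tau>)
      has_vector_derivative inner D1 (f2 t) + inner (f1 t) D2 + - (\<alpha> / Gamma (1 - \<alpha>)) *\<^sub>R R.L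
      - (t powr (- \<alpha>) / Gamma (1 - \<alpha>)) *\<^sub>R inner (f1 t) (f2 t)) (at t within {0..T})"
    using t exponents
    by (intro has_vector_derivative_add has_vector_derivative_diff R.RL_J1_has_vector_derivative
        RL_J1_const_has_vector_derivative bounded_linear.has_vector_derivative[OF _ D1]
        bounded_linear.has_vector_derivative[OF _ D2] bounded_linear_inner_left
        bounded_linear_inner_right) auto
  also have "inner D1 (f2 t) + inner (f1 t) D2 + - (\<alpha> / Gamma (1 - \<alpha>)) *\<^sub>R R.L
      - (t powr (- \<alpha>) / Gamma (1 - \<alpha>)) *\<^sub>R inner (f1 t) (f2 t)
      = inner D1 (f2 t) + inner (f1 t) D2 - \<alpha> / Gamma (1 - \<alpha>)
        * integral {0..t} (\<lambda>s. (t - s) powr (- \<alpha> - 1) * inner (f1 s - f1 t) (f2 s - f2 t))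
      - t powr (- \<alpha>) / Gamma (1 - \<alpha>) * inner (f1 t) (f2 t)"
    by (simp add: R.L_def)
  finally show ?thesis
  proof (rule has_vector_derivative_transform_within[OF _ zero_less_one])
    fix x assume "x \<in> {0..T}"
    then show "inner (RL_J1 \<alpha> f1 x) (f2 t) + inner (f1 t) (RL_J1 \<alpha> f2 x)
        + RL_J1 \<alpha> (\<lambda>s. inner (f1 s - f1 t) (f2 s - f2 t)) x - RL_J1 \<alpha> (\<lambda>_. inner (f1 t) (f2 t)) x
        = RL_J1 \<alpha> (\<lambda>s. inner (f1 s) (f2 s)) x"
      using exponents cont
      by (intro RL_J1_inner_decomposition[symmetric]) (auto intro: continuous_on_subset)
  qed (use t in auto)
qed

lemma RL_D_inner:
  fixes f1 f2 :: "real \<Rightarrow> 'a::{real_inner, complete_space}"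
  assumes t: "0 < t" "t \<le> T" and exponents: "0 < \<alpha>" "\<alpha> < \<gamma>" "\<gamma> \<le> 1"
    and cont: "continuous_on {0..T} f1" "continuous_on {0..T} f2"
    and exists: "RL_D_exists T \<alpha> f1 t" "RL_D_exists T \<alpha> f2 t"
    and bound: "\<And>s. s \<in> {0..T} \<Longrightarrow> \<bar>inner (f1 s - f1 t) (f2 s - f2 t)\<bar> \<le> C * \<bar>s - t\<bar> powr \<gamma>"
  shows "RL_D_exists T \<alpha> (\<lambda>s. inner (f1 s) (f2 s)) t
    \<and> (\<lambda>s. inner (f1 s - f1 t) (f2 s - f2 t) / (t - s) powr (\<alpha> + 1)) integrable_on {0..t}
    \<and> RL_D T \<alpha> (\<lambda>s. inner (f1 s) (f2 s)) t =
        inner (RL_D T \<alpha> f1 t) (f2 t) + inner (f1 t) (RL_D T \<alpha> f2 t)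
        - \<alpha> / Gamma (1 - \<alpha>) *
            integral {0..t} (\<lambda>s. inner (f1 s - f1 t) (f2 s - f2 t) / (t - s) powr (\<alpha> + 1))
        - inner (f1 t) (f2 t) / (Gamma (1 - \<alpha>) * t powr \<alpha>)"
proof (intro conjI)
  interpret R: holder_vanishing "\<lambda>s. inner (f1 s - f1 t) (f2 s - f2 t)" T t \<alpha> \<gamma> C
    by unfold_locales (use assms in \<open>auto intro!: continuous_intros\<close>)
  have kernel: "(t - s) powr (- \<alpha> - 1) * r = r / (t - s) powr (\<alpha> + 1)" for s r
  proof -
    have "- \<alpha> - 1 = - (\<alpha> + 1)" by simp
    then show ?thesis by (simp only: powr_minus_divide) simp
  qed
  have D: "((\<lambda>\<tau>. RL_J1 \<alpha> f \<tau>) has_vector_derivative RL_D T \<alpha> f t) (at t within {0..T})"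
    if "RL_D_exists T \<alpha> f t" for f :: "real \<Rightarrow> 'a"
    using that by (simp add: RL_D_exists_def RL_D_def vector_derivative_works)
  note deriv =
    RL_J1_inner_has_vector_derivative[OF t exponents cont D[OF exists(1)] D[OF exists(2)] bound]
  then show "RL_D_exists T \<alpha> (\<lambda>s. inner (f1 s) (f2 s)) t"
    unfolding RL_D_exists_def by (rule differentiableI_vector)
  show "(\<lambda>s. inner (f1 s - f1 t) (f2 s - f2 t) / (t - s) powr (\<alpha> + 1)) integrable_on {0..t}"
    using R.L_integrable[of 0 t] t by (simp add: kernel)
  have "RL_D T \<alpha> (\<lambda>s. inner (f1 s) (f2 s)) t
      = inner (RL_D T \<alpha> f1 t) (f2 t) + inner (f1 t) (RL_D T \<alpha> f2 t)
      - \<alpha> / Gamma (1 - \<alpha>)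
        * integral {0..t} (\<lambda>s. (t - s) powr (- \<alpha> - 1) * inner (f1 s - f1 t) (f2 s - f2 t))
      - t powr (- \<alpha>) / Gamma (1 - \<alpha>) * inner (f1 t) (f2 t)"
    unfolding RL_D_def[of T \<alpha> "\<lambda>s. inner (f1 s) (f2 s)"] using deriv t
    by (intro vector_derivative_within_cbox[where a = 0 and b = T, simplified]) auto
  then show "RL_D T \<alpha> (\<lambda>s. inner (f1 s) (f2 s)) t
      = inner (RL_D T \<alpha> f1 t) (f2 t) + inner (f1 t) (RL_D T \<alpha> f2 t)
      - \<alpha> / Gamma (1 - \<alpha>)
        * integral {0..t} (\<lambda>s. inner (f1 s - f1 t) (f2 s - f2 t) / (t - s) powr (\<alpha> + 1))
      - inner (f1 t) (f2 t) / (Gamma (1 - \<alpha>) * t powr \<alpha>)"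
    by (simp add: kernel powr_minus_divide)
qed

lemma powr_le_powr_mult_powr:
  fixes x y a b :: real
  assumes "0 \<le> x" "x \<le> y" "b \<le> a"
  shows "x powr a \<le> y powr (a - b) * x powr b"
proof (cases "x = 0")
  case False
  then have "x powr a = x powr (a - b) * x powr b" by (simp add: powr_add[symmetric])
  also have "\<dots> \<le> y powr (a - b) * x powr b"
    using assms by (intro mult_right_mono powr_mono2) auto
  finally show ?thesis .
qed simp

lemma inner_increment_bound_continuous_holder:
  fixes f1 f2 :: "real \<Rightarrow> 'a::real_inner"
  assumes "continuous_on {0..T} f1" and "holder_space \<beta> T f2" and t: "t \<in> {0..T}"
  obtains C where "\<And>s. s \<in> {0..T} \<Longrightarrow> \<bar>inner (f1 s - f1 t) (f2 s - f2 t)\<bar> \<le> C * \<bar>s - t\<bar> powr \<beta>"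
proof -
  obtain B where B: "\<And>s. s \<in> {0..T} \<Longrightarrow> norm (f1 s) \<le> B"
    using compact_imp_bounded[OF compact_continuous_image[OF assms(1) compact_Icc]]
    unfolding bounded_iff by blast
  obtain M where M: "M > 0"
    "\<And>x y. x \<in> {0..T} \<Longrightarrow> y \<in> {0..T} \<Longrightarrow> norm (f2 x - f2 y) \<le> M * \<bar>x - y\<bar> powr \<beta>"
    using assms(2) unfolding holder_space_def by blast
  show ?thesis
  proof
    fix s assume s: "s \<in> {0..T}"
    have "norm (f1 s - f1 t) \<le> 2 * B"
      using norm_triangle_ineq4[of "f1 s" "f1 t"] B[OF s] B[OF t] by linarith
    have "\<bar>inner (f1 s - f1 t) (f2 s - f2 t)\<bar> \<le> norm (f1 s - f1 t) * norm (f2 s - f2 t)"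
      by (rule Cauchy_Schwarz_ineq2)
    also have "\<dots> \<le> 2 * B * (M * \<bar>s - t\<bar> powr \<beta>)"
      using \<open>norm (f1 s - f1 t) \<le> 2 * B\<close> M(2)[OF s t] order_trans[OF norm_ge_zero B[OF t]]
      by (intro mult_mono) auto
    finally show "\<bar>inner (f1 s - f1 t) (f2 s - f2 t)\<bar> \<le> 2 * B * M * \<bar>s - t\<bar> powr \<beta>"
      by (simp add: mult_ac)
  qed
qed

lemma inner_increment_bound_holder_holder:
  fixes f1 f2 :: "real \<Rightarrow> 'a::real_inner"
  assumes "holder_space \<beta> T f1" and "holder_space \<delta> T f2" and t: "t \<in> {0..T}"
    and "\<gamma> \<le> \<beta> + \<delta>"
  obtains C where "\<And>s. s \<in> {0..T} \<Longrightarrow> \<bar>inner (f1 s - f1 t) (f2 s - f2 t)\<bar> \<le> C * \<bar>s - t\<bar> powr \<gamma>"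
proof -
  obtain M1 where M1: "M1 > 0"
    "\<And>x y. x \<in> {0..T} \<Longrightarrow> y \<in> {0..T} \<Longrightarrow> norm (f1 x - f1 y) \<le> M1 * \<bar>x - y\<bar> powr \<beta>"
    using assms(1) unfolding holder_space_def by blast
  obtain M2 where M2: "M2 > 0"
    "\<And>x y. x \<in> {0..T} \<Longrightarrow> y \<in> {0..T} \<Longrightarrow> norm (f2 x - f2 y) \<le> M2 * \<bar>x - y\<bar> powr \<delta>"
    using assms(2) unfolding holder_space_def by blast
  show ?thesis
  proof
    fix s assume s: "s \<in> {0..T}"
    have "\<bar>inner (f1 s - f1 t) (f2 s - f2 t)\<bar> \<le> norm (f1 s - f1 t) * norm (f2 s - f2 t)"
      by (rule Cauchy_Schwarz_ineq2)
    also have "\<dots> \<le> (M1 * \<bar>s - t\<bar> powr \<beta>) * (M2 * \<bar>s - t\<bar> powr \<delta>)"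
      using M1(1) M1(2)[OF s t] M2(2)[OF s t] by (intro mult_mono) auto
    also have "\<dots> = M1 * M2 * \<bar>s - t\<bar> powr (\<beta> + \<delta>)" by (simp add: powr_add)
    also have "\<dots> \<le> M1 * M2 * (T powr (\<beta> + \<delta> - \<gamma>) * \<bar>s - t\<bar> powr \<gamma>)"
      using s t M1 M2 assms(4) by (intro mult_left_mono powr_le_powr_mult_powr) auto
    finally show "\<bar>inner (f1 s - f1 t) (f2 s - f2 t)\<bar>
        \<le> M1 * M2 * T powr (\<beta> + \<delta> - \<gamma>) * \<bar>s - t\<bar> powr \<gamma>"
      by (simp add: mult_ac)
  qed
qed

theorem theorem3p8:
  fixes f1 f2 :: "real \<Rightarrow> 'a::{real_inner, complete_space}"
    and T \<alpha> t :: real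
  assumes "T > 0" and "0 < \<alpha>" and "\<alpha> < 1" and "t \<in> {0<..T}"
    and "(continuous_on {0..T} f1 \<and> RL_D_exists T \<alpha> f1 t \<and>
          (\<exists>\<beta>. \<alpha> < \<beta> \<and> \<beta> < 1 \<and> holder_space \<beta> T f2))
       \<or> (\<exists>\<beta> \<delta>. 0 < \<beta> \<and> \<beta> < 1 \<and> 0 < \<delta> \<and> \<delta> < 1 \<and> \<alpha> < \<beta> + \<delta> \<and>
          holder_space \<beta> T f1 \<and> holder_space \<delta> T f2 \<and>
          RL_D_exists T \<alpha> f1 t \<and> RL_D_exists T \<alpha> f2 t)"
  shows "RL_D_exists T \<alpha> f2 t
    \<and> RL_D_exists T \<alpha> (\<lambda>s. inner (f1 s) (f2 s)) t
    \<and> (\<lambda>s. inner (f1 s - f1 t) (f2 s - f2 t) / (t - s) powr (\<alpha> + 1)) integrable_on {0..t}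
    \<and> RL_D T \<alpha> (\<lambda>s. inner (f1 s) (f2 s)) t =
        inner (RL_D T \<alpha> f1 t) (f2 t) + inner (f1 t) (RL_D T \<alpha> f2 t)
        - \<alpha> / Gamma (1 - \<alpha>) *
            integral {0..t} (\<lambda>s. inner (f1 s - f1 t) (f2 s - f2 t) / (t - s) powr (\<alpha> + 1))
        - inner (f1 t) (f2 t) / (Gamma (1 - \<alpha>) * t powr \<alpha>)"
proof -
  have t: "0 < t" "t \<le> T" "t \<in> {0..T}" using assms(4) by auto
  from assms(5) show ?thesis
  proof (elim disjE conjE exE)
    fix \<beta> assume f1: "continuous_on {0..T} f1" "RL_D_exists T \<alpha> f1 t"
      and \<beta>: "\<alpha> < \<beta>" "\<beta> < 1" and f2: "holder_space \<beta> T f2"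
    obtain C where bound:
      "\<And>s. s \<in> {0..T} \<Longrightarrow> \<bar>inner (f1 s - f1 t) (f2 s - f2 t)\<bar> \<le> C * \<bar>s - t\<bar> powr \<beta>"
      using inner_increment_bound_continuous_holder[OF f1(1) f2 t(3)] by blast
    have "RL_D_exists T \<alpha> f2 t"
      using \<beta> by (intro holder_space_imp_RL_D_exists[OF t(1,2) assms(2) \<beta>(1) _ f2]) simp
    moreover have "continuous_on {0..T} f2" using f2 by (simp add: holder_space_def)
    ultimately show ?thesis
      using RL_D_inner[OF t(1,2) assms(2) \<beta>(1) _ f1(1) _ f1(2) _ bound] \<beta> by simp
  next
    fix \<beta> \<delta> assume "\<alpha> < \<beta> + \<delta>" and f1: "holder_space \<beta> T f1" and f2: "holder_space \<delta> T f2"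
      and exists: "RL_D_exists T \<alpha> f1 t" "RL_D_exists T \<alpha> f2 t"
    obtain C where bound: "\<And>s. s \<in> {0..T} \<Longrightarrow>
        \<bar>inner (f1 s - f1 t) (f2 s - f2 t)\<bar> \<le> C * \<bar>s - t\<bar> powr min (\<beta> + \<delta>) 1"
      using inner_increment_bound_holder_holder[OF f1 f2 t(3)] by (metis min.cobounded1)
    have "continuous_on {0..T} f1" "continuous_on {0..T} f2"
      using f1 f2 by (simp_all add: holder_space_def)
    then show ?thesis
      using RL_D_inner[OF t(1,2) assms(2) _ _ _ _ exists bound] exists \<open>\<alpha> < \<beta> + \<delta>\<close> assms(3)
      by simp
  qed
qed

end
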